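(* Let $0<a<1$ and let $w^*_n(a)$, $n\ge0$, be the rational functions of $(r,y,z)$ defined in the context. Then for all $n\ge1$, $$w^*_n(a)^2-w^*_{n+1}(a)w^*_{n-1}(a)=a^2(1-a)^2r^2z^4x_a^{\,n-2}.$$
   Context: Let $r,y,z$ be indeterminates. For $c\in(0,1)$ put $\omega_c:=1-(1-c)^2r^2y^2z^2$, $\tau_c:=1+(1-c)^2r^2z^2y(1-y)$, $x_c:=c^2z^2\tau_c^2$, $\beta_c:=1+z^2\big(c^2-(1-c)^2r^2(y^2+c^2(1-y)^2z^2)\big)$. Define $w^*_0(c):=(\beta_c-\omega_c)/x_c$, $w^*_1(c):=1$, and $w^*_{n+1}(c):=\beta_cw^*_n(c)-x_cw^*_{n-1}(c)$ for $n\ge1$ (so $w^*_2(c)=\omega_c$). *)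

theory Defs
  imports Complex_Main
begin

text \<open>The indeterminates r, y, z are evaluated at real points; the rational-function
identity is stated at every real point where the denominators (powers of x_c) are nonzero.\<close>

definition omegac :: "real \<Rightarrow> real \<Rightarrow> real \<Rightarrow> real \<Rightarrow> real" where
  "omegac c r y z = 1 - (1 - c)^2 * r^2 * y^2 * z^2"

definition tauc :: "real \<Rightarrow> real \<Rightarrow> real \<Rightarrow> real \<Rightarrow> real" where
  "tauc c r y z = 1 + (1 - c)^2 * r^2 * z^2 * y * (1 - y)"

definition xc :: "real \<Rightarrow> real \<Rightarrow> real \<Rightarrow> real \<Rightarrow> real" where
  "xc c r y z = c^2 * z^2 * (tauc c r y z)^2"

definition betac :: "real \<Rightarrow> real \<Rightarrow> real \<Rightarrow> real \<Rightarrow> real" where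
  "betac c r y z = 1 + z^2 * (c^2 - (1 - c)^2 * r^2 * (y^2 + c^2 * (1 - y)^2 * z^2))"

fun wstar :: "real \<Rightarrow> real \<Rightarrow> real \<Rightarrow> real \<Rightarrow> nat \<Rightarrow> real" where
  "wstar c r y z 0 = (betac c r y z - omegac c r y z) / xc c r y z"
| "wstar c r y z (Suc 0) = 1"
| "wstar c r y z (Suc (Suc n)) =
     betac c r y z * wstar c r y z (Suc n) - xc c r y z * wstar c r y z n"

end

theory Submission
  imports Defs
begin

text \<open>The left-hand side is the Casoratian of the three-term recurrence defining the
  w*_n; for any solution of w_(n+2) = \<beta> w_(n+1) - x w_n it gets multiplied by x at each step,
  so it equals x^(n-1) times its value at n = 1, which is the polynomial identity
  x - \<omega> (\<beta> - \<omega>) = a^2 (1-a)^2 r^2 z^4 divided by x.\<close>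

lemma casoratian_linear_recurrence:
  fixes w :: "nat \<Rightarrow> 'a::comm_ring_1"
  assumes rec: "\<And>n. w (Suc (Suc n)) = \<beta> * w (Suc n) - x * w n"
  shows "(w (Suc n))^2 - w (Suc (Suc n)) * w n = x^n * ((w 1)^2 - w 2 * w 0)"
proof (induction n)
  case 0
  show ?case by (simp add: numeral_2_eq_2)
next
  case (Suc n)
  have "(w (Suc (Suc n)))^2 - w (Suc (Suc (Suc n))) * w (Suc n)
      = x * ((w (Suc n))^2 - w (Suc (Suc n)) * w n)"
    unfolding rec[of "Suc n"] rec[of n] by (simp add: algebra_simps power2_eq_square)
  then show ?case using Suc.IH by simp
qed

lemma xc_minus_omegac_times:
  "xc a r y z - omegac a r y z * (betac a r y z - omegac a r y z) = a^2 * (1 - a)^2 * r^2 * z^4"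
  unfolding xc_def omegac_def betac_def tauc_def
  by (simp add: algebra_simps power2_eq_square power4_eq_xxxx)

lemma wstar_casoratian_initial:
  assumes "xc a r y z \<noteq> 0"
  shows "(wstar a r y z 1)^2 - wstar a r y z 2 * wstar a r y z 0
       = a^2 * (1 - a)^2 * r^2 * z^4 / xc a r y z"
  using assms xc_minus_omegac_times[of a r y z]
  by (simp add: numeral_2_eq_2 field_simps)

theorem lemma1:
  fixes a r y z :: real and n :: nat
  assumes "0 < a" "a < 1"
    and "xc a r y z \<noteq> 0"
    and "n \<ge> 1"
  shows "(wstar a r y z n)^2 - wstar a r y z (n + 1) * wstar a r y z (n - 1)
           = a^2 * (1 - a)^2 * r^2 * z^4 * (xc a r y z) powi (int n - 2)"
proof -
  obtain m where n: "n = Suc m" using assms(4) by (cases n) auto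
  have "(wstar a r y z n)^2 - wstar a r y z (n + 1) * wstar a r y z (n - 1)
      = (xc a r y z)^m * (a^2 * (1 - a)^2 * r^2 * z^4 / xc a r y z)"
    using casoratian_linear_recurrence[of "wstar a r y z" "betac a r y z" "xc a r y z" m]
      wstar_casoratian_initial[OF assms(3)] n by simp
  moreover have "(xc a r y z) powi (int n - 2) = (xc a r y z)^m / xc a r y z"
    using assms(3) n by (simp add: power_int_diff)
  ultimately show ?thesis by simp
qed

end
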